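(* Let $U$ be the distribution function of a sub-probability measure on $(0,\infty)$, set $\hat U(\lambda)=\int_0^\infty e^{-\lambda x}\,dU(x)$, and let $p>0$. (a) If for some $C_2>0$, $\hat U(\lambda)\le C_2\lambda^{-p}$ for all $\lambda>0$, then $U(a)\le eC_2a^p$ for all $a>0$. (b) Assume $\hat U(\lambda)\le C_2\lambda^{-p}$ for all $\lambda>0$ and, for some $C_1>0$ and $\underline\lambda\ge0$, $\hat U(\lambda)\ge C_1\lambda^{-p}$ for all $\lambda>\underline\lambda$. If \[d_1=\frac{C_1}2\Bigl(2\log\Bigl(\Bigl(\frac{2p}e\Bigr)^p\frac{4eC_2}{C_1}\Bigr)\vee2p\vee\underline\lambda\Bigr)^{-p},\] then $U(a)\ge d_1a^p$ for all $a\in[0,1]$. In particular, if $p\le1$ and $\underline\lambda\le4$, then \[U(a)\ge\frac{C_1}4\Bigl(\log\Bigl(\frac{4eC_2}{C_1}\Bigr)\Bigr)^{-1}a^p\quad\text{for all }a\in[0,1].\] *)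

theory Defs
  imports "HOL-Probability.Probability"
begin

definition dfun :: "real measure \<Rightarrow> real \<Rightarrow> real" where
  "dfun M a = measure M {..a}"

definition lap :: "real measure \<Rightarrow> real \<Rightarrow> real" where
  "lap M l = (\<integral>x. exp (- l * x) \<partial>M)"

end

theory Submission
  imports Defs
begin

text \<open>
  Write \<open>U\<close> for the distribution function and \<open>L\<close> for its Laplace transform; the measure
  lives on \<open>(0, \<infinity>)\<close>. Since \<open>1{x \<le> a} \<le> exp (\<lambda> (a - x))\<close>, we have
  \<open>U(a) \<le> exp (\<lambda> a) L(\<lambda>)\<close>, and \<open>\<lambda> = 1/a\<close> gives the upper bound.
  For the lower bounds, \<open>exp (-\<lambda> x) \<le> 1{x \<le> a} + exp (-\<lambda> a/2) exp (-\<lambda> x/2)\<close> yields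
  \<open>C\<^sub>1 \<lambda>\<^sup>-\<^sup>p \<le> L(\<lambda>) \<le> U(a) + 2\<^sup>p C\<^sub>2 exp (-\<lambda> a/2) \<lambda>\<^sup>-\<^sup>p\<close>. If \<open>\<lambda> a \<ge> t\<close> for a threshold \<open>t\<close>
  with \<open>2\<^sup>p C\<^sub>2 exp (-t/2) \<le> C\<^sub>1/2\<close>, the tail term is absorbed and \<open>U(a) \<ge> C\<^sub>1/2 \<lambda>\<^sup>-\<^sup>p\<close>;
  letting \<open>\<lambda> \<down> t/a\<close> gives \<open>U(a) \<ge> C\<^sub>1/2 t\<^sup>-\<^sup>p a\<^sup>p\<close>. Both stated lower bounds are this
  estimate for explicit thresholds; the first uses \<open>e\<^sup>p\<^sup>-\<^sup>1 \<le> p\<^sup>p\<close>, the second \<open>C\<^sub>1 \<le> C\<^sub>2\<close>.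
\<close>

lemma exp_minus_one_le_powr_self:
  fixes p :: real
  assumes "p > 0"
  shows "exp (p - 1) \<le> p powr p"
proof -
  have "ln (1 / p) \<le> 1 / p - 1"
    using assms by (intro ln_le_minus_one) auto
  then have "p * (- ln p) \<le> p * (1 / p - 1)"
    using assms by (intro mult_left_mono) (auto simp: ln_div)
  then have "p - 1 \<le> p * ln p"
    using assms by (simp add: right_diff_distrib)
  then show ?thesis
    using assms by (simp add: powr_def mult.commute)
qed

lemma tail_coeff_le_half_of_ge_log:
  fixes p C1 C2 t :: real
  assumes "p > 0" "C1 > 0" "C2 > 0"
    and t: "2 * ln ((2 * p / exp 1) powr p * (4 * exp 1 * C2 / C1)) \<le> t"
  shows "2 powr p * C2 * exp (- t / 2) \<le> C1 / 2"
proof -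
  define X where "X = (2 * p / exp 1) powr p * (4 * exp 1 * C2 / C1)"
  have "X > 0"
    unfolding X_def using assms by simp
  have "exp (- t / 2) \<le> exp (- ln X)"
    using t unfolding X_def by simp
  also have "\<dots> = 1 / X"
    using \<open>X > 0\<close> by (simp add: exp_minus inverse_eq_divide)
  finally have "2 powr p * C2 * exp (- t / 2) \<le> 2 powr p * C2 * (1 / X)"
    using assms by (intro mult_left_mono) auto
  also have "\<dots> = C1 / 4 * (exp p / exp 1 / p powr p)"
    unfolding X_def using assms
    by (simp add: powr_divide powr_mult exp_powr_real field_simps)
  also have "\<dots> = C1 / 4 * (exp (p - 1) / p powr p)"
    by (simp add: exp_diff)
  also have "\<dots> \<le> C1 / 4"
    using exp_minus_one_le_powr_self[OF \<open>p > 0\<close>] assms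
    by (intro mult_left_le) (auto simp: divide_le_eq_1)
  finally show ?thesis
    using assms by simp
qed

lemma tail_coeff_le_half_small_exponent:
  fixes p C1 C2 :: real
  assumes "p \<le> 1" "C1 > 0" "C1 \<le> C2"
  shows "2 powr p * C2 * exp (- ln (4 * exp 1 * C2 / C1)) \<le> C1 / 2"
proof -
  have "2 powr p \<le> (2::real)"
    using powr_mono[of p 1 2] \<open>p \<le> 1\<close> by simp
  have "2 powr p * C2 * exp (- ln (4 * exp 1 * C2 / C1)) = 2 powr p * C1 / (4 * exp 1)"
    using assms by (simp add: exp_minus field_simps)
  also have "\<dots> \<le> 2 * C1 / (4 * 1)"
    using \<open>2 powr p \<le> 2\<close> assms by (intro frac_le mult_right_mono) auto
  finally show ?thesis
    by simp
qed

lemma ln_ratio_ge_two: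
  fixes C1 C2 :: real
  assumes "C1 > 0" "C1 \<le> C2"
  shows "2 \<le> ln (4 * exp 1 * C2 / C1)"
proof -
  have "exp 2 = exp 1 * exp (1::real)"
    by (simp flip: exp_add)
  also have "\<dots> \<le> 4 * exp 1"
    using exp_le by simp
  also have "\<dots> \<le> 4 * exp 1 * C2 / C1"
    using assms by (simp add: field_simps)
  finally show ?thesis
    using assms by (simp add: ln_ge_iff)
qed

lemma inverse_le_powr_minus:
  fixes p L C :: real
  assumes "p \<le> 1" "1 \<le> L" "C \<ge> 0"
  shows "C / 4 * inverse L \<le> C / 2 * (2 * L) powr (-p)"
proof -
  have "(2 * L) powr p \<le> (2 * L) powr 1"
    using assms by (intro powr_mono) auto
  then have "1 / (2 * L) \<le> 1 / (2 * L) powr p"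
    using assms by (intro divide_left_mono) auto
  have "C / 4 * inverse L = C / 2 * (1 / (2 * L))"
    by (simp add: inverse_eq_divide)
  also have "\<dots> \<le> C / 2 * (1 / (2 * L) powr p)"
    using \<open>1 / (2 * L) \<le> 1 / (2 * L) powr p\<close> assms by (intro mult_left_mono) auto
  also have "\<dots> = C / 2 * (2 * L) powr (-p)"
    by (simp add: powr_minus_divide)
  finally show ?thesis .
qed

locale subprob_on_positives = subprob_space M for M :: "real measure" +
  assumes sets_M: "sets M = sets borel"
    and emeasure_nonpos: "emeasure M {..0} = 0"
begin

lemma space_M: "space M = UNIV"
  using sets_eq_imp_space_eq[OF sets_M] by simp

lemma borel_measurable_M: "f \<in> borel_measurable borel \<Longrightarrow> f \<in> borel_measurable M"
  by (subst measurable_cong_sets[OF sets_M refl])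

lemma AE_pos: "AE x in M. x > 0"
proof (rule AE_I')
  show "{..0} \<in> null_sets M"
    using emeasure_nonpos sets_M by (auto intro: null_setsI)
qed auto

lemma integrable_indicator_atMost: "integrable M (indicator {..a} :: real \<Rightarrow> real)"
  using sets_M by (simp add: integrable_indicator_iff space_M less_top[symmetric])

lemma integrable_exp_neg:
  assumes "l \<ge> 0"
  shows "integrable M (\<lambda>x. exp (- l * x))"
proof (rule integrable_const_bound[where B=1])
  show "AE x in M. norm (exp (- l * x)) \<le> 1"
    using AE_pos by eventually_elim (use assms in \<open>auto\<close>)
  show "(\<lambda>x. exp (- l * x)) \<in> borel_measurable M"
    by (intro borel_measurable_M) measurable
qed

lemma dfun_eq_integral: "dfun M a = (\<integral>x. indicator {..a} x \<partial>M)"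
  by (simp add: dfun_def space_M)

lemma dfun_zero: "dfun M 0 = 0"
  using emeasure_nonpos by (simp add: dfun_def measure_def)

lemma lap_nonneg: "lap M l \<ge> 0"
  by (simp add: lap_def)

lemma dfun_le_exp_mult_lap:
  assumes "l \<ge> 0"
  shows "dfun M a \<le> exp (l * a) * lap M l"
proof -
  have "dfun M a \<le> (\<integral>x. exp (l * a) * exp (- l * x) \<partial>M)"
    unfolding dfun_eq_integral
  proof (rule integral_mono_AE[OF integrable_indicator_atMost])
    show "integrable M (\<lambda>x. exp (l * a) * exp (- l * x))"
      using integrable_exp_neg[OF assms] by simp
    show "AE x in M. indicator {..a} x \<le> exp (l * a) * exp (- l * x)"
    proof (rule AE_I2)
      fix x
      have "indicator {..a} x \<le> exp (l * (a - x))"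
        using assms by (auto simp: indicator_def)
      then show "indicator {..a} x \<le> exp (l * a) * exp (- l * x)"
        by (simp add: right_diff_distrib flip: exp_add)
    qed
  qed
  then show ?thesis by (simp add: lap_def)
qed

lemma lap_le_dfun_add_tail:
  assumes "0 \<le> m" "m \<le> l"
  shows "lap M l \<le> dfun M a + exp (- (l - m) * a) * lap M m"
proof -
  have "lap M l \<le> (\<integral>x. indicator {..a} x + exp (- (l - m) * a) * exp (- m * x) \<partial>M)"
    unfolding lap_def
  proof (rule integral_mono_AE)
    show "integrable M (\<lambda>x. exp (- l * x))"
      using integrable_exp_neg assms by simp
    show "integrable M (\<lambda>x. indicator {..a} x + exp (- (l - m) * a) * exp (- m * x))"
      using integrable_indicator_atMost integrable_exp_neg[OF assms(1)] by simp
    show "AE x in M. exp (- l * x) \<le> indicator {..a} x + exp (- (l - m) * a) * exp (- m * x)"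
      using AE_pos
    proof eventually_elim
      case (elim x)
      show ?case
      proof (cases "x \<le> a")
        case True
        then show ?thesis using assms elim by (simp add: add_increasing2)
      next
        case False
        then have "(l - m) * a \<le> (l - m) * x"
          using assms by (intro mult_left_mono) auto
        then have "exp (- l * x) \<le> exp (- (l - m) * a) * exp (- m * x)"
          by (simp add: algebra_simps flip: exp_add)
        then show ?thesis using False by simp
      qed
    qed
  qed
  also have "\<dots> = dfun M a + exp (- (l - m) * a) * lap M m"
    using integrable_indicator_atMost integrable_exp_neg[OF assms(1)]
    by (simp add: lap_def dfun_eq_integral)
  finally show ?thesis .
qed

lemma dfun_upper_bound:
  assumes up: "\<forall>l>0. lap M l \<le> C2 * l powr (-p)" and "a > 0"
  shows "dfun M a \<le> exp 1 * C2 * a powr p"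
proof -
  have "dfun M a \<le> exp (1 / a * a) * lap M (1 / a)"
    using assms by (intro dfun_le_exp_mult_lap) auto
  also have "\<dots> \<le> exp 1 * (C2 * (1 / a) powr (-p))"
    using up \<open>a > 0\<close> by simp
  also have "\<dots> = exp 1 * C2 * a powr p"
    using \<open>a > 0\<close> by (simp add: powr_divide powr_minus_divide)
  finally show ?thesis .
qed

lemma lap_bound_constants_le:
  assumes up: "\<forall>l>0. lap M l \<le> C2 * l powr (-p)"
    and low: "\<forall>l>l0. C1 * l powr (-p) \<le> lap M l" and "l0 \<ge> 0"
  shows "C1 \<le> C2"
proof -
  have "C1 * (l0 + 1) powr (-p) \<le> C2 * (l0 + 1) powr (-p)"
    using up low \<open>l0 \<ge> 0\<close> by (meson add_nonneg_pos less_add_one order.trans zero_less_one)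
  moreover have "(l0 + 1) powr (-p) > 0"
    using \<open>l0 \<ge> 0\<close> by simp
  ultimately show ?thesis by simp
qed

lemma dfun_ge_powr_at:
  assumes up: "\<forall>l>0. lap M l \<le> C2 * l powr (-p)"
    and low: "\<forall>l>l0. C1 * l powr (-p) \<le> lap M l"
    and "l > l0" "l > 0" "t \<le> l * a"
    and threshold: "2 powr p * C2 * exp (- t / 2) \<le> C1 / 2"
  shows "C1 / 2 * l powr (-p) \<le> dfun M a"
proof -
  have "C1 * l powr (-p) \<le> lap M l"
    using low \<open>l > l0\<close> by simp
  also have "\<dots> \<le> dfun M a + exp (- (l - l / 2) * a) * lap M (l / 2)"
    using \<open>l > 0\<close> by (intro lap_le_dfun_add_tail) auto
  also have "\<dots> \<le> dfun M a + exp (- t / 2) * (C2 * (l / 2) powr (-p))"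
    using up \<open>l > 0\<close> \<open>t \<le> l * a\<close> lap_nonneg
    by (intro add_left_mono mult_mono) auto
  also have "\<dots> = dfun M a + (2 powr p * C2 * exp (- t / 2)) * l powr (-p)"
    by (simp add: powr_divide powr_minus_divide)
  also have "\<dots> \<le> dfun M a + C1 / 2 * l powr (-p)"
    using threshold by (intro add_left_mono mult_right_mono) auto
  finally show ?thesis by simp
qed

lemma dfun_ge_of_threshold:
  assumes up: "\<forall>l>0. lap M l \<le> C2 * l powr (-p)"
    and low: "\<forall>l>l0. C1 * l powr (-p) \<le> lap M l"
    and "0 < t" "l0 \<le> t"
    and threshold: "2 powr p * C2 * exp (- t / 2) \<le> C1 / 2"
    and a: "a \<in> {0..1}"
  shows "C1 / 2 * t powr (-p) * a powr p \<le> dfun M a"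
proof (cases "a = 0")
  case True
  then show ?thesis by (simp add: dfun_zero)
next
  case False
  with a have "0 < a" "a \<le> 1" by auto
  then have "t \<le> t / a"
    using \<open>0 < t\<close> by (simp add: field_simps)
  txt \<open>The lower bound on \<open>lap\<close> is only assumed for \<open>l > l0\<close>, which may fail at \<open>l = t / a\<close>
    itself (when \<open>t = l0\<close> and \<open>a = 1\<close>), hence the limit from the right.\<close>
  have "\<forall>\<^sub>F l in at_right (t / a). C1 / 2 * l powr (-p) \<le> dfun M a"
  proof (rule eventually_at_rightI[where b = "t / a + 1"])
    fix l assume "l \<in> {t / a<..<t / a + 1}"
    then have "t / a < l" by simp
    then have "t \<le> l * a"
      using \<open>0 < a\<close> by (simp add: field_simps)
    show "C1 / 2 * l powr (-p) \<le> dfun M a"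
      using \<open>t / a < l\<close> \<open>0 < t\<close> \<open>l0 \<le> t\<close> \<open>t \<le> t / a\<close>
      by (intro dfun_ge_powr_at[OF up low _ _ \<open>t \<le> l * a\<close> threshold]) auto
  qed simp
  moreover have "((\<lambda>l. C1 / 2 * l powr (-p)) \<longlongrightarrow> C1 / 2 * (t / a) powr (-p)) (at_right (t / a))"
    using \<open>0 < t\<close> \<open>0 < a\<close> by (intro tendsto_intros) auto
  ultimately have "C1 / 2 * (t / a) powr (-p) \<le> dfun M a"
    by (intro tendsto_le[OF trivial_limit_at_right_real tendsto_const])
  then show ?thesis
    using \<open>0 < t\<close> \<open>0 < a\<close> by (simp add: powr_divide powr_minus_divide)
qed

lemma dfun_lower_bound:
  assumes "p > 0" "C1 > 0" "C2 > 0"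
    and up: "\<forall>l>0. lap M l \<le> C2 * l powr (-p)"
    and low: "\<forall>l>l0. C1 * l powr (-p) \<le> lap M l"
    and "a \<in> {0..1}"
  shows "C1 / 2 * (max (max (2 * ln ((2 * p / exp 1) powr p * (4 * exp 1 * C2 / C1))) (2 * p)) l0)
      powr (-p) * a powr p \<le> dfun M a"
  using assms by (intro dfun_ge_of_threshold[OF up low] tail_coeff_le_half_of_ge_log) auto

lemma dfun_lower_bound_small_exponent:
  assumes "0 < p" "p \<le> 1" "C1 > 0" "0 \<le> l0" "l0 \<le> 4"
    and up: "\<forall>l>0. lap M l \<le> C2 * l powr (-p)"
    and low: "\<forall>l>l0. C1 * l powr (-p) \<le> lap M l"
    and a: "a \<in> {0..1}"
  shows "C1 / 4 * inverse (ln (4 * exp 1 * C2 / C1)) * a powr p \<le> dfun M a"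
proof -
  define L where "L = ln (4 * exp 1 * C2 / C1)"
  have "C1 \<le> C2"
    using lap_bound_constants_le[OF up low \<open>0 \<le> l0\<close>] .
  then have "2 \<le> L"
    unfolding L_def using \<open>C1 > 0\<close> by (intro ln_ratio_ge_two)
  have "2 powr p * C2 * exp (- (2 * L) / 2) \<le> C1 / 2"
    unfolding L_def using tail_coeff_le_half_small_exponent[OF \<open>p \<le> 1\<close> \<open>C1 > 0\<close> \<open>C1 \<le> C2\<close>] by simp
  then have "C1 / 2 * (2 * L) powr (-p) * a powr p \<le> dfun M a"
    using \<open>2 \<le> L\<close> \<open>l0 \<le> 4\<close> a by (intro dfun_ge_of_threshold[OF up low]) auto
  moreover have "C1 / 4 * inverse L \<le> C1 / 2 * (2 * L) powr (-p)"
    using assms \<open>2 \<le> L\<close> by (intro inverse_le_powr_minus) auto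
  ultimately show ?thesis
    unfolding L_def[symmetric] by (meson order.trans mult_right_mono powr_ge_zero)
qed

end

theorem lemma4p7:
  fixes M :: "real measure" and p :: real
  assumes "subprob_space M" and "sets M = sets borel"
    and "emeasure M {..0} = 0"
    and "p > 0"
  shows
   "(\<forall>C2>0. (\<forall>l>0. lap M l \<le> C2 * l powr (-p)) \<longrightarrow>
        (\<forall>a>0. dfun M a \<le> exp 1 * C2 * a powr p))
    \<and>
    (\<forall>C1 C2 l0. C1 > 0 \<and> C2 > 0 \<and> l0 \<ge> 0 \<and>
        (\<forall>l>0. lap M l \<le> C2 * l powr (-p)) \<and>
        (\<forall>l>l0. lap M l \<ge> C1 * l powr (-p)) \<longrightarrow>
        (let d1 = C1 / 2 * (max (max (2 * ln ((2 * p / exp 1) powr p * (4 * exp 1 * C2 / C1)))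
                                       (2 * p)) l0) powr (-p)
         in \<forall>a\<in>{0..1}. dfun M a \<ge> d1 * a powr p)
      \<and> (p \<le> 1 \<and> l0 \<le> 4 \<longrightarrow>
           (\<forall>a\<in>{0..1}. dfun M a \<ge> C1 / 4 * inverse (ln (4 * exp 1 * C2 / C1)) * a powr p)))"
proof -
  interpret subprob_on_positives M
    using assms(1-3) by (intro subprob_on_positives.intro subprob_on_positives_axioms.intro)
  show ?thesis
    unfolding Let_def
  proof (intro conjI allI impI ballI)
    fix C2 a :: real
    assume "\<forall>l>0. lap M l \<le> C2 * l powr (-p)" "a > 0"
    then show "dfun M a \<le> exp 1 * C2 * a powr p"
      by (rule dfun_upper_bound)
  next
    fix C1 C2 l0 a :: real
    assume "C1 > 0 \<and> C2 > 0 \<and> l0 \<ge> 0 \<and> (\<forall>l>0. lap M l \<le> C2 * l powr (-p))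
      \<and> (\<forall>l>l0. lap M l \<ge> C1 * l powr (-p))" "a \<in> {0..1}"
    then show "C1 / 2 * (max (max (2 * ln ((2 * p / exp 1) powr p * (4 * exp 1 * C2 / C1)))
        (2 * p)) l0) powr (-p) * a powr p \<le> dfun M a"
      using \<open>p > 0\<close> by (intro dfun_lower_bound) auto
  next
    fix C1 C2 l0 a :: real
    assume "C1 > 0 \<and> C2 > 0 \<and> l0 \<ge> 0 \<and> (\<forall>l>0. lap M l \<le> C2 * l powr (-p))
      \<and> (\<forall>l>l0. lap M l \<ge> C1 * l powr (-p))" "p \<le> 1 \<and> l0 \<le> 4" "a \<in> {0..1}"
    then show "C1 / 4 * inverse (ln (4 * exp 1 * C2 / C1)) * a powr p \<le> dfun M a"
      using \<open>p > 0\<close> by (intro dfun_lower_bound_small_exponent[of p C1 l0 C2]) auto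
  qed
qed

end
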